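(* Let $\mathcal{K}\subseteq\mathbb{R}\cup\{\pm\infty\}$ have nonzero Lebesgue measure, let $\varpi:\mathcal{K}\to\mathbb{R}_{\geq 0}$ be Lebesgue integrable with only countably many zeros, let $d,n,\rho\in\mathbb{N}$, let $\mathbf{f}\in\mathbb{L}^2_{\varpi}(\mathcal{K};\mathbb{R}^d)$ satisfy $\mathsf{F}^{-1}:=\int_{\mathcal{K}}\varpi(\tau)\mathbf{f}(\tau)\mathbf{f}^\top(\tau)\,d\tau\succ 0$, put $F(\tau)=\mathbf{f}(\tau)\otimes I_n$, and let $U\in\mathbb{R}^{n\times n}$ be symmetric with $U\succ 0$. Let $\mathbf{x}\in\mathbb{L}^2_{\varpi}(\mathcal{K};\mathbb{R}^n)$, $\boldsymbol{\vartheta}=\int_{\mathcal{K}}\varpi F\mathbf{x}\,d\tau$, and let $\Upsilon\in\mathbb{R}^{dn\times\rho n}$, $\mathbf{z}\in\mathbb{R}^{\rho n}$ satisfy $\Upsilon\mathbf{z}=\boldsymbol{\vartheta}$. For symmetric $Y\in\mathbb{R}^{\rho dn\times\rho dn}$ and $X=[X_1\ \cdots\ X_d]\in\mathbb{R}^{n\times\rho dn}$ ($X_i\in\mathbb{R}^{n\times\rho n}$) put $\widehat{X}=\mathrm{Col}_{i=1}^dX_i$ and $W=\int_{\mathcal{K}}\varpi(\tau)(\mathbf{f}^\top(\tau)\otimes I_{\rho n})Y(\mathbf{f}(\tau)\otimes I_{\rho n})\,d\tau$. Then for all such $X,Y$ satisfying $\begin{bmatrix}U&-X\\-X^\top&Y\end{bmatrix}\succeq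 0$, $$\mathbf{z}^\top\big[\Upsilon^\top\widehat{X}+\widehat{X}^\top\Upsilon-W\big]\mathbf{z}\;\leq\;\boldsymbol{\vartheta}^\top(\mathsf{F}\otimes U)\boldsymbol{\vartheta},$$ and equality holds for $\widehat{X}=(\mathsf{F}\otimes U)\Upsilon$ and $Y=X^\top U^{-1}X$ (which satisfy the matrix inequality). Thus the largest lower bound of the form $\mathbf{z}^\top[\Upsilon^\top\widehat{X}+\widehat{X}^\top\Upsilon-W]\mathbf{z}$ for $\int_{\mathcal{K}}\varpi\,\mathbf{x}^\top U\mathbf{x}\,d\tau$ equals the lower bound $\boldsymbol{\vartheta}^\top(\mathsf{F}\otimes U)\boldsymbol{\vartheta}$.
   Context: $\mathbb{L}^2_{\varpi}(\mathcal{K};\mathbb{R}^m)$ is the set of Lebesgue integrable functions $\phi:\mathcal{K}\to\mathbb{R}^m$ with $\int_{\mathcal{K}}\varpi\phi^\top\phi\,d\tau<\infty$. $\mathrm{Col}$ stacks blocks vertically; $\otimes$ is the Kronecker product. *)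

theory Defs
  imports "HOL-Analysis.Analysis" "Jordan_Normal_Form.Gauss_Jordan_Elimination"
begin

definition kron :: "real mat \<Rightarrow> real mat \<Rightarrow> real mat" where
  "kron A B = mat (dim_row A * dim_row B) (dim_col A * dim_col B)
     (\<lambda>(i, j). A $$ (i div dim_row B, j div dim_col B) * B $$ (i mod dim_row B, j mod dim_col B))"

definition col_mat :: "real Matrix.vec \<Rightarrow> real mat" where
  "col_mat v = mat_of_cols (dim_vec v) [v]"

definition mat_inv :: "real mat \<Rightarrow> real mat" where
  "mat_inv A = the (mat_inverse A)"

definition sym_mat :: "real mat \<Rightarrow> bool" where
  "sym_mat A \<longleftrightarrow> transpose_mat A = A"

definition psd_mat :: "nat \<Rightarrow> real mat \<Rightarrow> bool" where
  "psd_mat k A \<longleftrightarrow> A \<in> carrier_mat k k \<and> sym_mat A \<and>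
     (\<forall>v \<in> carrier_vec k. scalar_prod v (A *\<^sub>v v) \<ge> 0)"

definition pd_mat :: "nat \<Rightarrow> real mat \<Rightarrow> bool" where
  "pd_mat k A \<longleftrightarrow> A \<in> carrier_mat k k \<and> sym_mat A \<and>
     (\<forall>v \<in> carrier_vec k. v \<noteq> 0\<^sub>v k \<longrightarrow> scalar_prod v (A *\<^sub>v v) > 0)"

definition weighted_L2 :: "real set \<Rightarrow> (real \<Rightarrow> real) \<Rightarrow> nat \<Rightarrow> (real \<Rightarrow> real Matrix.vec) \<Rightarrow> bool" where
  "weighted_L2 K w m \<phi> \<longleftrightarrow> (\<forall>\<tau>. \<phi> \<tau> \<in> carrier_vec m) \<and>
     (\<forall>i<m. set_borel_measurable lebesgue K (\<lambda>\<tau>. \<phi> \<tau> $ i)) \<and>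
     set_integrable lebesgue K (\<lambda>\<tau>. w \<tau> * scalar_prod (\<phi> \<tau>) (\<phi> \<tau>))"

definition mat_integral :: "real set \<Rightarrow> (real \<Rightarrow> real) \<Rightarrow> nat \<Rightarrow> nat \<Rightarrow> (real \<Rightarrow> real mat) \<Rightarrow> real mat" where
  "mat_integral K w r c M = mat r c (\<lambda>(i, j). LINT \<tau>:K|lebesgue. w \<tau> * M \<tau> $$ (i, j))"

definition vec_integral :: "real set \<Rightarrow> (real \<Rightarrow> real) \<Rightarrow> nat \<Rightarrow> (real \<Rightarrow> real Matrix.vec) \<Rightarrow> real Matrix.vec" where
  "vec_integral K w r v = Matrix.vec r (\<lambda>i. LINT \<tau>:K|lebesgue. w \<tau> * v \<tau> $ i)"

(* X = [X_1 ... X_d] (n x (d*m), X_i of size n x m)  \<mapsto>  Col_{i=1}^d X_i  ((d*n) x m) *)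
definition col_stack :: "nat \<Rightarrow> nat \<Rightarrow> nat \<Rightarrow> real mat \<Rightarrow> real mat" where
  "col_stack d n m X = mat (d * n) m (\<lambda>(r, c). X $$ (r mod n, (r div n) * m + c))"

end

(*
  Write G = \<integral> w f f\<^sup>T for the Gram matrix of f and \<Theta> = \<integral> w f x\<^sup>T, so that \<theta> is \<Theta> read row by
  row.  The bound \<theta>\<^sup>T (G\<^sup>-\<^sup>1 \<otimes> U) \<theta> equals \<langle>\<Theta> U, G\<^sup>-\<^sup>1 \<Theta>\<rangle>, the U-energy of the weighted least-squares
  projection (G\<^sup>-\<^sup>1 \<Theta>)\<^sup>T f of x onto the span of the components of f.

  Positive semidefiniteness of [U, -X; -X\<^sup>T, Y] gives 2 a\<^sup>T X b \<le> a\<^sup>T U a + b\<^sup>T Y b pointwise.  Take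
  b = (I \<otimes> z) f(\<tau>) and integrate against w.  The lower-bound expression is
  2 \<langle>X (I \<otimes> z), \<Theta>\<^sup>T\<rangle> - \<langle>Y, (I \<otimes> z) G (I \<otimes> z)\<^sup>T\<rangle>, and \<integral> w a b\<^sup>T = \<Theta>\<^sup>T (I \<otimes> z)\<^sup>T both for a = x and
  for a = (G\<^sup>-\<^sup>1 \<Theta>)\<^sup>T f.  The first choice shows that every admissible (X, Y) gives a lower bound of
  \<integral> w x\<^sup>T U x, the second that none of these exceeds the projection bound.  Finally the stacked
  choice (G\<^sup>-\<^sup>1 \<otimes> U) \<Upsilon> with Y = X\<^sup>T U\<^sup>-\<^sup>1 X is admissible by a Schur complement argument and
  attains the projection bound, which is therefore itself below \<integral> w x\<^sup>T U x.
*)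
theory Submission
  imports Defs "Jordan_Normal_Form.Determinant"
begin

section \<open>Frobenius inner product\<close>

definition frobenius_prod :: "real mat \<Rightarrow> real mat \<Rightarrow> real" where
  "frobenius_prod A B = (\<Sum>i<dim_row A. \<Sum>j<dim_col A. A $$ (i, j) * B $$ (i, j))"

lemma frobenius_prod_commute:
  assumes "A \<in> carrier_mat r c" "B \<in> carrier_mat r c"
  shows "frobenius_prod A B = frobenius_prod B A"
  using assms by (simp add: frobenius_prod_def mult.commute)

lemma frobenius_prod_transpose:
  assumes "A \<in> carrier_mat r c" "B \<in> carrier_mat r c"
  shows "frobenius_prod (transpose_mat A) (transpose_mat B) = frobenius_prod A B"
  using assms by (simp add: frobenius_prod_def sum.swap[where A = "{..<c}"])

lemma frobenius_prod_mult_left: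
  assumes "A \<in> carrier_mat r c" "B \<in> carrier_mat r k" "C \<in> carrier_mat k c"
  shows "frobenius_prod A (B * C) = frobenius_prod (transpose_mat B * A) C"
  using assms by (simp add: frobenius_prod_def scalar_prod_def atLeast0LessThan sum_distrib_left
      sum_distrib_right mult_ac sum.swap[where A = "{..<r}"] sum.swap[where A = "{..<c}" and B = "{..<k}"])

lemma frobenius_prod_mult_right:
  assumes "A \<in> carrier_mat r c" "B \<in> carrier_mat r k" "C \<in> carrier_mat k c"
  shows "frobenius_prod A (B * C) = frobenius_prod (A * transpose_mat C) B"
  using assms by (simp add: frobenius_prod_def scalar_prod_def atLeast0LessThan sum_distrib_left
      sum_distrib_right mult_ac sum.swap[where A = "{..<c}"])

lemma frobenius_prod_congruence:
  assumes A: "A \<in> carrier_mat n n" and C: "C \<in> carrier_mat n k" and B: "B \<in> carrier_mat k k"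
  shows "frobenius_prod (transpose_mat C * A * C) B = frobenius_prod A (C * B * transpose_mat C)"
proof -
  have "frobenius_prod (transpose_mat C * A * C) B = frobenius_prod B (transpose_mat C * (A * C))"
    using assms by (simp add: frobenius_prod_commute[of _ k k])
  also have "\<dots> = frobenius_prod (C * B) (A * C)"
    using assms by (simp add: frobenius_prod_mult_left[of _ k k _ n])
  also have "\<dots> = frobenius_prod (C * B * transpose_mat C) A"
    using assms by (simp add: frobenius_prod_mult_right[of _ n k _ n])
  also have "\<dots> = frobenius_prod A (C * B * transpose_mat C)"
    using assms by (simp add: frobenius_prod_commute[of _ n n])
  finally show ?thesis .
qed

section \<open>Kronecker products, reshaping and column stacking\<close>

lemma mult_add_less_mult:
  fixes i j d n :: nat
  assumes "i < d" "j < n"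
  shows "i * n + j < d * n"
proof -
  have "i * n + j < Suc i * n" using assms(2) by simp
  also have "\<dots> \<le> d * n" using assms(1) by (intro mult_le_mono1) simp
  finally show ?thesis .
qed

lemma sum_lessThan_mult:
  fixes d n :: nat
  shows "(\<Sum>k<d * n. g k) = (\<Sum>i<d. \<Sum>j<n. g (i * n + j))"
  by (simp add: sum_mult_product add.commute)

lemma dim_kron [simp]:
  "dim_row (kron A B) = dim_row A * dim_row B" "dim_col (kron A B) = dim_col A * dim_col B"
  by (simp_all add: kron_def)

lemma index_kron_mult_add:
  assumes "A \<in> carrier_mat a b" "B \<in> carrier_mat c e" "i < a" "j < b" "k < c" "l < e"
  shows "kron A B $$ (i * c + k, j * e + l) = A $$ (i, j) * B $$ (k, l)"
  using assms mult_add_less_mult[of i a k c] mult_add_less_mult[of j b l e] by (simp add: kron_def)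

lemma transpose_kron: "transpose_mat (kron A B) = kron (transpose_mat A) (transpose_mat B)"
proof (rule eq_matI)
  fix i j assume "i < dim_row (kron (transpose_mat A) (transpose_mat B))"
    "j < dim_col (kron (transpose_mat A) (transpose_mat B))"
  then have i: "i < dim_col A * dim_col B" and j: "j < dim_row A * dim_row B" by (simp_all add: kron_def)
  then have "0 < dim_col B" "0 < dim_row B" by (auto intro: gr0I)
  then show "transpose_mat (kron A B) $$ (i, j) = kron (transpose_mat A) (transpose_mat B) $$ (i, j)"
    using i j by (simp add: kron_def less_mult_imp_div_less)
qed (simp_all add: kron_def)

lemma col_mat_dims [simp]: "dim_row (col_mat v) = dim_vec v" "dim_col (col_mat v) = 1"
  by (simp_all add: col_mat_def)

lemma index_col_mat [simp]: "i < dim_vec v \<Longrightarrow> col_mat v $$ (i, 0) = v $ i"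
  by (simp add: col_mat_def mat_of_cols_index)

definition reshape :: "nat \<Rightarrow> nat \<Rightarrow> real Matrix.vec \<Rightarrow> real mat" where
  "reshape d n v = mat d n (\<lambda>(i, j). v $ (i * n + j))"

lemma reshape_carrier [simp]: "reshape d n v \<in> carrier_mat d n"
  and dim_reshape [simp]: "dim_row (reshape d n v) = d" "dim_col (reshape d n v) = n"
  by (simp_all add: reshape_def)

lemma index_reshape [simp]: "i < d \<Longrightarrow> j < n \<Longrightarrow> reshape d n v $$ (i, j) = v $ (i * n + j)"
  by (simp add: reshape_def)

lemma scalar_prod_reshape:
  assumes "u \<in> carrier_vec (d * n)" "v \<in> carrier_vec (d * n)"
  shows "u \<bullet> v = frobenius_prod (reshape d n u) (reshape d n v)"
  using assms by (simp add: scalar_prod_def frobenius_prod_def atLeast0LessThan sum_lessThan_mult)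

lemma reshape_inject:
  assumes "u \<in> carrier_vec (d * n)" "v \<in> carrier_vec (d * n)" "reshape d n u = reshape d n v"
  shows "u = v"
proof (rule eq_vecI)
  fix k assume "k < dim_vec v"
  then have k: "k < d * n" using assms(2) by simp
  then have "0 < n" by (cases n) auto
  then have "k div n < d" "k mod n < n" using k by (auto simp: less_mult_imp_div_less)
  then have "reshape d n u $$ (k div n, k mod n) = reshape d n v $$ (k div n, k mod n)"
    using assms(3) by simp
  then show "u $ k = v $ k" using \<open>k div n < d\<close> \<open>k mod n < n\<close> by simp
qed (use assms in simp)

lemma reshape_kron_mult_vec:
  assumes A: "A \<in> carrier_mat d d'" and B: "B \<in> carrier_mat n n'" and v: "v \<in> carrier_vec (d' * n')"
  shows "reshape d n (kron A B *\<^sub>v v) = A * reshape d' n' v * transpose_mat B"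
proof (rule eq_matI)
  fix i j assume "i < dim_row (A * reshape d' n' v * transpose_mat B)"
    "j < dim_col (A * reshape d' n' v * transpose_mat B)"
  then have ij: "i < d" "j < n" using A B by auto
  have "(kron A B *\<^sub>v v) $ (i * n + j)
      = (\<Sum>r<d'. \<Sum>k<n'. kron A B $$ (i * n + j, r * n' + k) * v $ (r * n' + k))"
    using A B v mult_add_less_mult[OF ij]
    by (simp add: scalar_prod_def atLeast0LessThan sum_lessThan_mult)
  also have "\<dots> = (\<Sum>r<d'. \<Sum>k<n'. A $$ (i, r) * B $$ (j, k) * v $ (r * n' + k))"
    using A B ij by (intro sum.cong refl) (simp add: index_kron_mult_add)
  also have "\<dots> = (A * reshape d' n' v * transpose_mat B) $$ (i, j)"
    using A B ij by (simp add: scalar_prod_def atLeast0LessThan sum_distrib_left sum_distrib_right mult_ac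
        sum.swap[where A = "{..<d'}"])
  finally show "reshape d n (kron A B *\<^sub>v v) $$ (i, j) = (A * reshape d' n' v * transpose_mat B) $$ (i, j)"
    using ij by simp
qed (use A B in auto)

lemma reshape_row: "v \<in> carrier_vec n \<Longrightarrow> reshape 1 n v = transpose_mat (col_mat v)"
  by (rule eq_matI) auto

lemma reshape_col: "v \<in> carrier_vec d \<Longrightarrow> reshape d 1 v = col_mat v"
  by (rule eq_matI) auto

lemma reshape_kron_col_mat_one:
  assumes "v \<in> carrier_vec d" "z \<in> carrier_vec m"
  shows "reshape d m (kron (col_mat v) (1\<^sub>m m) *\<^sub>v z) = col_mat v * transpose_mat (col_mat z)"
proof -
  have "reshape d m (kron (col_mat v) (1\<^sub>m m) *\<^sub>v z) = col_mat v * reshape 1 m z * transpose_mat (1\<^sub>m m)"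
    using assms by (intro reshape_kron_mult_vec) auto
  then show ?thesis using assms reshape_row[OF assms(2)] by simp
qed

lemma reshape_kron_one_col_mat:
  assumes "v \<in> carrier_vec d" "z \<in> carrier_vec m"
  shows "reshape d m (kron (1\<^sub>m d) (col_mat z) *\<^sub>v v) = col_mat v * transpose_mat (col_mat z)"
proof -
  have "reshape d m (kron (1\<^sub>m d) (col_mat z) *\<^sub>v v) = 1\<^sub>m d * reshape d 1 v * transpose_mat (col_mat z)"
    using assms by (intro reshape_kron_mult_vec) auto
  then show ?thesis using assms reshape_col[OF assms(1)] by simp
qed

lemma kron_col_mat_one_mult_vec:
  assumes "v \<in> carrier_vec d" "z \<in> carrier_vec m"
  shows "kron (col_mat v) (1\<^sub>m m) *\<^sub>v z = kron (1\<^sub>m d) (col_mat z) *\<^sub>v v"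
proof (rule reshape_inject)
  show "kron (col_mat v) (1\<^sub>m m) *\<^sub>v z \<in> carrier_vec (d * m)"
    "kron (1\<^sub>m d) (col_mat z) *\<^sub>v v \<in> carrier_vec (d * m)"
    using assms by (auto intro: carrier_vecI)
  show "reshape d m (kron (col_mat v) (1\<^sub>m m) *\<^sub>v z) = reshape d m (kron (1\<^sub>m d) (col_mat z) *\<^sub>v v)"
    using assms by (simp add: reshape_kron_col_mat_one reshape_kron_one_col_mat)
qed

lemma index_kron_one_col_mat:
  assumes "z \<in> carrier_vec m" "l < d" "p < m" "i < d"
  shows "kron (1\<^sub>m d) (col_mat z) $$ (l * m + p, i) = (if l = i then z $ p else 0)"
proof -
  have "kron (1\<^sub>m d) (col_mat z) $$ (l * m + p, i * 1 + 0) = 1\<^sub>m d $$ (l, i) * col_mat z $$ (p, 0)"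
    by (rule index_kron_mult_add) (use assms in auto)
  then show ?thesis using assms by simp
qed

lemma reshape_col_stack_mult_vec:
  assumes X: "X \<in> carrier_mat n (d * m)" and z: "z \<in> carrier_vec m"
  shows "reshape d n (col_stack d n m X *\<^sub>v z) = transpose_mat (X * kron (1\<^sub>m d) (col_mat z))"
proof (rule eq_matI)
  fix i j assume "i < dim_row (transpose_mat (X * kron (1\<^sub>m d) (col_mat z)))"
    "j < dim_col (transpose_mat (X * kron (1\<^sub>m d) (col_mat z)))"
  then have ij: "i < d" "j < n" using X z by auto
  have "(X * kron (1\<^sub>m d) (col_mat z)) $$ (j, i)
      = (\<Sum>c<d * m. X $$ (j, c) * kron (1\<^sub>m d) (col_mat z) $$ (c, i))"
    using X z ij by (simp add: scalar_prod_def atLeast0LessThan)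
  also have "\<dots> = (\<Sum>l<d. \<Sum>p<m. X $$ (j, l * m + p) * (if l = i then z $ p else 0))"
    using z ij by (simp add: sum_lessThan_mult index_kron_one_col_mat)
  also have "\<dots> = (\<Sum>p<m. X $$ (j, i * m + p) * z $ p)"
    using ij by (simp add: sum.swap[where A = "{..<d}"] if_distrib sum.delta cong: if_cong)
  also have "\<dots> = (col_stack d n m X *\<^sub>v z) $ (i * n + j)"
    using X z ij mult_add_less_mult[OF ij] by (simp add: col_stack_def scalar_prod_def atLeast0LessThan)
  finally show "reshape d n (col_stack d n m X *\<^sub>v z) $$ (i, j)
      = transpose_mat (X * kron (1\<^sub>m d) (col_mat z)) $$ (i, j)"
    using X ij by simp
qed (use X z in auto)

lemma col_stack_surj:
  assumes B: "B \<in> carrier_mat (d * n) m"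
  shows "\<exists>X \<in> carrier_mat n (d * m). col_stack d n m X = B"
proof
  define X where "X = mat n (d * m) (\<lambda>(j, c). B $$ ((c div m) * n + j, c mod m))"
  show "X \<in> carrier_mat n (d * m)" by (simp add: X_def)
  show "col_stack d n m X = B"
  proof (rule eq_matI)
    fix r c assume "r < dim_row B" "c < dim_col B"
    then have r: "r < d * n" and c: "c < m" using B by auto
    then have "0 < n" by (cases n) auto
    then have "r div n < d" "r mod n < n" using r by (auto simp: less_mult_imp_div_less)
    then show "col_stack d n m X $$ (r, c) = B $$ (r, c)"
      using r c mult_add_less_mult[of "r div n" d c m] by (simp add: col_stack_def X_def)
  qed (use B in \<open>auto simp: col_stack_def\<close>)
qed

section \<open>Quadratic forms and block matrices\<close>

lemma scalar_prod_as_sum: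
  fixes A :: "real mat"
  assumes "A \<in> carrier_mat N M" "u \<in> carrier_vec N" "v \<in> carrier_vec M"
  shows "u \<bullet> (A *\<^sub>v v) = (\<Sum>a<N. \<Sum>b<M. A $$ (a, b) * (u $ a * v $ b))"
  using assms by (simp add: scalar_prod_def atLeast0LessThan sum_distrib_left mult_ac)

lemma index_mult_mat_vec_sum:
  fixes A :: "real mat"
  assumes "A \<in> carrier_mat k N" "v \<in> carrier_vec N" "i < k"
  shows "(A *\<^sub>v v) $ i = (\<Sum>j<N. A $$ (i, j) * v $ j)"
  using assms by (simp add: scalar_prod_def atLeast0LessThan)

lemma index_as_scalar_prod:
  fixes A :: "real mat"
  assumes "A \<in> carrier_mat r c" "p < r" "q < c"
  shows "A $$ (p, q) = unit_vec r p \<bullet> (A *\<^sub>v unit_vec c q)"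
  using assms by simp

lemma scalar_prod_mult_mat_vec:
  fixes A B :: "real mat"
  assumes A: "A \<in> carrier_mat k N" and B: "B \<in> carrier_mat k M"
    and x: "x \<in> carrier_vec N" and y: "y \<in> carrier_vec M"
  shows "(A *\<^sub>v x) \<bullet> (B *\<^sub>v y) = x \<bullet> ((transpose_mat A * B) *\<^sub>v y)"
proof -
  have "x \<bullet> ((transpose_mat A * B) *\<^sub>v y) = (transpose_mat A *\<^sub>v (B *\<^sub>v y)) \<bullet> x"
    using assms by (simp add: comm_scalar_prod[of x N])
  also have "\<dots> = (B *\<^sub>v y) \<bullet> (A *\<^sub>v x)"
    using assms by (intro transpose_vec_mult_scalar) auto
  also have "\<dots> = (A *\<^sub>v x) \<bullet> (B *\<^sub>v y)"
    using assms by (intro comm_scalar_prod[of _ k]) auto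
  finally show ?thesis ..
qed

lemma quadratic_form_symmetrized:
  fixes A B C :: "real mat"
  assumes A: "A \<in> carrier_mat r c" and B: "B \<in> carrier_mat r c" and C: "C \<in> carrier_mat c c"
    and z: "z \<in> carrier_vec c"
  shows "z \<bullet> ((transpose_mat A * B + transpose_mat B * A - C) *\<^sub>v z)
    = 2 * ((A *\<^sub>v z) \<bullet> (B *\<^sub>v z)) - z \<bullet> (C *\<^sub>v z)"
proof -
  have AB: "transpose_mat A * B \<in> carrier_mat c c" and BA: "transpose_mat B * A \<in> carrier_mat c c"
    using A B by auto
  have "z \<bullet> ((transpose_mat A * B + transpose_mat B * A - C) *\<^sub>v z)
      = z \<bullet> ((transpose_mat A * B) *\<^sub>v z) + z \<bullet> ((transpose_mat B * A) *\<^sub>v z) - z \<bullet> (C *\<^sub>v z)"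
    using AB BA C z
    by (simp add: minus_mult_distrib_mat_vec[OF add_carrier_mat[OF BA] C z] add_mult_distrib_mat_vec[OF AB BA z]
        scalar_prod_minus_distrib[OF z] scalar_prod_add_distrib[OF z])
  also have "z \<bullet> ((transpose_mat A * B) *\<^sub>v z) = (A *\<^sub>v z) \<bullet> (B *\<^sub>v z)"
    using A B z z by (rule scalar_prod_mult_mat_vec[symmetric])
  also have "z \<bullet> ((transpose_mat B * A) *\<^sub>v z) = (B *\<^sub>v z) \<bullet> (A *\<^sub>v z)"
    using B A z z by (rule scalar_prod_mult_mat_vec[symmetric])
  also have "\<dots> = (A *\<^sub>v z) \<bullet> (B *\<^sub>v z)"
    using A B z by (intro comm_scalar_prod[of _ r]) auto
  finally show ?thesis by simp
qed

lemma mult_sandwich_transpose: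
  fixes X Z G :: "real mat"
  assumes X: "X \<in> carrier_mat n k" and Z: "Z \<in> carrier_mat k l" and G: "G \<in> carrier_mat l l"
  shows "X * (Z * G * transpose_mat Z) * transpose_mat X = X * Z * G * transpose_mat (X * Z)"
proof -
  have ZG: "Z * G \<in> carrier_mat k l" and XZG: "X * Z * G \<in> carrier_mat n l"
    and ZT: "transpose_mat Z \<in> carrier_mat l k" and XT: "transpose_mat X \<in> carrier_mat k n"
    using assms by auto
  have "X * (Z * G * transpose_mat Z) * transpose_mat X = X * (Z * G) * transpose_mat Z * transpose_mat X"
    by (simp add: assoc_mult_mat[OF X ZG ZT])
  also have "X * (Z * G) = X * Z * G" by (rule assoc_mult_mat[OF X Z G, symmetric])
  also have "X * Z * G * transpose_mat Z * transpose_mat X = X * Z * G * (transpose_mat Z * transpose_mat X)"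
    by (rule assoc_mult_mat[OF XZG ZT XT])
  finally show ?thesis by (simp add: transpose_mult[OF X Z])
qed

lemma scalar_prod_kron_sandwich:
  assumes v: "v \<in> carrier_vec d" and Y: "Y \<in> carrier_mat (d * m) (d * m)"
    and u: "u \<in> carrier_vec m" and z: "z \<in> carrier_vec m"
  shows "u \<bullet> ((kron (transpose_mat (col_mat v)) (1\<^sub>m m) * Y * kron (col_mat v) (1\<^sub>m m)) *\<^sub>v z)
    = (kron (1\<^sub>m d) (col_mat u) *\<^sub>v v) \<bullet> (Y *\<^sub>v (kron (1\<^sub>m d) (col_mat z) *\<^sub>v v))"
proof -
  define L where "L = kron (col_mat v) (1\<^sub>m m)"
  have L: "L \<in> carrier_mat (d * m) m" using v unfolding L_def by (intro carrier_matI) simp_all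
  have LT: "kron (transpose_mat (col_mat v)) (1\<^sub>m m) = transpose_mat L"
    by (simp add: L_def transpose_kron)
  have YLz: "Y *\<^sub>v (L *\<^sub>v z) \<in> carrier_vec (d * m)" using Y L z by simp
  have "(transpose_mat L * Y * L) *\<^sub>v z = (transpose_mat L * Y) *\<^sub>v (L *\<^sub>v z)"
    using L Y z by (intro assoc_mult_mat_vec) auto
  also have "\<dots> = transpose_mat L *\<^sub>v (Y *\<^sub>v (L *\<^sub>v z))"
    using L Y z by (intro assoc_mult_mat_vec) auto
  finally have "u \<bullet> ((transpose_mat L * Y * L) *\<^sub>v z) = (transpose_mat L *\<^sub>v (Y *\<^sub>v (L *\<^sub>v z))) \<bullet> u"
    using u L YLz by (simp add: comm_scalar_prod[of u m])
  also have "\<dots> = (Y *\<^sub>v (L *\<^sub>v z)) \<bullet> (L *\<^sub>v u)"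
    using L u YLz by (rule transpose_vec_mult_scalar)
  also have "\<dots> = (L *\<^sub>v u) \<bullet> (Y *\<^sub>v (L *\<^sub>v z))"
    using L u YLz by (intro comm_scalar_prod[of _ "d * m"]) auto
  finally show ?thesis
    using v u z unfolding LT by (simp add: L_def kron_col_mat_one_mult_vec)
qed

lemma four_block_quadratic_form:
  fixes U X Y :: "real mat"
  assumes U: "U \<in> carrier_mat n n" and X: "X \<in> carrier_mat n D" and Y: "Y \<in> carrier_mat D D"
    and a: "a \<in> carrier_vec n" and b: "b \<in> carrier_vec D"
  shows "(a @\<^sub>v b) \<bullet> (four_block_mat U (- X) (- transpose_mat X) Y *\<^sub>v (a @\<^sub>v b))
    = a \<bullet> (U *\<^sub>v a) - 2 * (a \<bullet> (X *\<^sub>v b)) + b \<bullet> (Y *\<^sub>v b)"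
proof -
  have Xb: "X *\<^sub>v b \<in> carrier_vec n" and XTa: "transpose_mat X *\<^sub>v a \<in> carrier_vec D"
    using X a b by auto
  have "b \<bullet> (transpose_mat X *\<^sub>v a) = (transpose_mat X *\<^sub>v a) \<bullet> b"
    using b XTa by (rule comm_scalar_prod)
  also have "\<dots> = a \<bullet> (X *\<^sub>v b)"
    using X b a by (rule transpose_vec_mult_scalar)
  finally have swap: "b \<bullet> (transpose_mat X *\<^sub>v a) = a \<bullet> (X *\<^sub>v b)" .
  have "four_block_mat U (- X) (- transpose_mat X) Y *\<^sub>v (a @\<^sub>v b)
      = (U *\<^sub>v a + - X *\<^sub>v b) @\<^sub>v (- transpose_mat X *\<^sub>v a + Y *\<^sub>v b)"
    using assms by (intro four_block_mat_mult_vec) auto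
  then have "(a @\<^sub>v b) \<bullet> (four_block_mat U (- X) (- transpose_mat X) Y *\<^sub>v (a @\<^sub>v b))
      = a \<bullet> (U *\<^sub>v a + - (X *\<^sub>v b)) + b \<bullet> (- (transpose_mat X *\<^sub>v a) + Y *\<^sub>v b)"
    using assms by (simp add: scalar_prod_append[of _ n _ D])
  also have "\<dots> = a \<bullet> (U *\<^sub>v a) - a \<bullet> (X *\<^sub>v b) - b \<bullet> (transpose_mat X *\<^sub>v a) + b \<bullet> (Y *\<^sub>v b)"
    using assms Xb XTa by (simp add: scalar_prod_add_distrib[of _ n] scalar_prod_add_distrib[of _ D])
  finally show ?thesis unfolding swap by simp
qed

lemma psd_four_block_quadratic:
  fixes U X Y :: "real mat"
  assumes U: "U \<in> carrier_mat n n" and X: "X \<in> carrier_mat n D" and Y: "Y \<in> carrier_mat D D"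
    and psd: "psd_mat (n + D) (four_block_mat U (- X) (- transpose_mat X) Y)"
    and a: "a \<in> carrier_vec n" and b: "b \<in> carrier_vec D"
  shows "2 * (a \<bullet> (X *\<^sub>v b)) \<le> a \<bullet> (U *\<^sub>v a) + b \<bullet> (Y *\<^sub>v b)"
proof -
  have "0 \<le> (a @\<^sub>v b) \<bullet> (four_block_mat U (- X) (- transpose_mat X) Y *\<^sub>v (a @\<^sub>v b))"
    using psd a b unfolding psd_mat_def by auto
  then show ?thesis unfolding four_block_quadratic_form[OF U X Y a b] by simp
qed

lemma sym_mat_four_block:
  fixes U X Y :: "real mat"
  assumes "U \<in> carrier_mat n n" "X \<in> carrier_mat n D" "Y \<in> carrier_mat D D" "sym_mat U" "sym_mat Y"
  shows "sym_mat (four_block_mat U (- X) (- transpose_mat X) Y)"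
  using assms unfolding sym_mat_def
  by (subst transpose_four_block_mat[of _ n n _ D _ D]) (auto simp: transpose_uminus)

lemma sym_mat_congruence:
  fixes A X :: "real mat"
  assumes "A \<in> carrier_mat n n" "X \<in> carrier_mat n D" "sym_mat A"
  shows "sym_mat (transpose_mat X * A * X)"
proof -
  have "transpose_mat (transpose_mat X * A * X) = transpose_mat X * transpose_mat (transpose_mat X * A)"
    using assms by (intro transpose_mult) auto
  also have "transpose_mat (transpose_mat X * A) = transpose_mat A * X"
    using assms by (subst transpose_mult) auto
  finally show ?thesis
    using assms unfolding sym_mat_def by (simp add: assoc_mult_mat[of _ D n])
qed

lemma pd_mat_nonneg:
  assumes "pd_mat k A" "v \<in> carrier_vec k"
  shows "0 \<le> v \<bullet> (A *\<^sub>v v)"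
proof (cases "v = 0\<^sub>v k")
  case True
  then show ?thesis using assms unfolding pd_mat_def by auto
next
  case False
  then show ?thesis using assms unfolding pd_mat_def by (meson less_imp_le)
qed

lemma pd_mat_inverse:
  assumes pd: "pd_mat k A"
  shows "mat_inv A \<in> carrier_mat k k" "A * mat_inv A = 1\<^sub>m k" "mat_inv A * A = 1\<^sub>m k"
    "sym_mat (mat_inv A)"
proof -
  have A: "A \<in> carrier_mat k k" and sym: "transpose_mat A = A"
    using pd unfolding pd_mat_def sym_mat_def by auto
  have "\<not> (\<exists>v. v \<in> carrier_vec k \<and> v \<noteq> 0\<^sub>v k \<and> A *\<^sub>v v = 0\<^sub>v k)"
    using pd unfolding pd_mat_def by force
  then have "Determinant.det A \<noteq> 0" using det_0_iff_vec_prod_zero[OF A] by simp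
  then have "A \<in> Units (ring_mat TYPE(real) k ())" by (rule det_non_zero_imp_unit[OF A])
  then obtain B where B: "mat_inverse A = Some B"
    using mat_inverse(1)[OF A, of "()"] by (cases "mat_inverse A") auto
  then have inv: "mat_inv A = B" by (simp add: mat_inv_def)
  have AB: "A * B = 1\<^sub>m k" "B * A = 1\<^sub>m k" and Bc: "B \<in> carrier_mat k k"
    using mat_inverse(2)[OF A B] by auto
  then show "mat_inv A \<in> carrier_mat k k" "A * mat_inv A = 1\<^sub>m k" "mat_inv A * A = 1\<^sub>m k"
    unfolding inv by auto
  have "transpose_mat B = transpose_mat B * (A * B)" using AB Bc by simp
  also have "\<dots> = transpose_mat (A * B) * B"
    using A Bc sym by (simp add: transpose_mult[of _ k k] assoc_mult_mat[of _ k k])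
  also have "\<dots> = B" using AB Bc by simp
  finally show "sym_mat (mat_inv A)" unfolding inv sym_mat_def .
qed

lemma pd_mat_completing_square:
  assumes pd: "pd_mat n U" and a: "a \<in> carrier_vec n" and y: "y \<in> carrier_vec n"
  defines "c \<equiv> a - mat_inv U *\<^sub>v y"
  shows "a \<bullet> (U *\<^sub>v a) - 2 * (a \<bullet> y) + y \<bullet> (mat_inv U *\<^sub>v y) = c \<bullet> (U *\<^sub>v c)"
proof -
  define u where "u = mat_inv U *\<^sub>v y"
  have U: "U \<in> carrier_mat n n" and Usym: "transpose_mat U = U"
    using pd unfolding pd_mat_def sym_mat_def by auto
  have u: "u \<in> carrier_vec n" using pd_mat_inverse(1)[OF pd] y by (simp add: u_def)
  have Uu: "U *\<^sub>v u = y"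
    using pd_mat_inverse(1,2)[OF pd] U y by (simp add: u_def flip: assoc_mult_mat_vec)
  have "u \<bullet> (U *\<^sub>v a) = (transpose_mat U *\<^sub>v u) \<bullet> a"
    using U a u by (rule transpose_vec_mult_scalar[symmetric])
  also have "\<dots> = a \<bullet> y" using Usym Uu a y by (simp add: comm_scalar_prod[of y n])
  finally have uUa: "u \<bullet> (U *\<^sub>v a) = a \<bullet> y" .
  have "c \<bullet> (U *\<^sub>v c) = (a - u) \<bullet> (U *\<^sub>v a - y)"
    using U a u Uu by (simp add: c_def u_def[symmetric] mult_minus_distrib_mat_vec)
  also have "\<dots> = a \<bullet> (U *\<^sub>v a) - a \<bullet> y - (u \<bullet> (U *\<^sub>v a) - u \<bullet> y)"
    using U a u y by (simp add: minus_scalar_prod_distrib[of _ n] scalar_prod_minus_distrib[of _ n])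
  also have "u \<bullet> y = y \<bullet> (mat_inv U *\<^sub>v y)" using u y by (simp add: u_def comm_scalar_prod[of _ n])
  finally show ?thesis using uUa by simp
qed

lemma psd_four_block_schur:
  assumes pd: "pd_mat n U" and X: "X \<in> carrier_mat n D"
  shows "psd_mat (n + D) (four_block_mat U (- X) (- transpose_mat X) (transpose_mat X * mat_inv U * X))"
  unfolding psd_mat_def
proof (intro conjI ballI)
  have U: "U \<in> carrier_mat n n" and Usym: "sym_mat U" using pd unfolding pd_mat_def by auto
  note Ui = pd_mat_inverse(1,4)[OF pd]
  have Y: "transpose_mat X * mat_inv U * X \<in> carrier_mat D D" using X Ui by auto
  show "four_block_mat U (- X) (- transpose_mat X) (transpose_mat X * mat_inv U * X) \<in> carrier_mat (n + D) (n + D)"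
    using U X Y by auto
  show "sym_mat (four_block_mat U (- X) (- transpose_mat X) (transpose_mat X * mat_inv U * X))"
    using U X Y Usym sym_mat_congruence[OF Ui(1) X Ui(2)] by (rule sym_mat_four_block)
  fix v :: "real Matrix.vec" assume "v \<in> carrier_vec (n + D)"
  then obtain a b where a: "a \<in> carrier_vec n" and b: "b \<in> carrier_vec D" and v: "v = a @\<^sub>v b"
    by (metis vec_first_carrier vec_last_carrier vec_first_last_append)
  have Xb: "X *\<^sub>v b \<in> carrier_vec n" using X b by simp
  have "b \<bullet> ((transpose_mat X * mat_inv U * X) *\<^sub>v b) = b \<bullet> ((transpose_mat X * (mat_inv U * X)) *\<^sub>v b)"
    using X Ui by (simp add: assoc_mult_mat[of _ D n])
  also have "\<dots> = (X *\<^sub>v b) \<bullet> ((mat_inv U * X) *\<^sub>v b)"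
    by (rule scalar_prod_mult_mat_vec[symmetric]) (use X Ui b in auto)
  also have "\<dots> = (X *\<^sub>v b) \<bullet> (mat_inv U *\<^sub>v (X *\<^sub>v b))"
    using X Ui b by simp
  finally have "v \<bullet> (four_block_mat U (- X) (- transpose_mat X) (transpose_mat X * mat_inv U * X) *\<^sub>v v)
      = a \<bullet> (U *\<^sub>v a) - 2 * (a \<bullet> (X *\<^sub>v b)) + (X *\<^sub>v b) \<bullet> (mat_inv U *\<^sub>v (X *\<^sub>v b))"
    unfolding v four_block_quadratic_form[OF U X Y a b] by simp
  also have "\<dots> \<ge> 0"
    unfolding pd_mat_completing_square[OF pd a Xb] using pd_mat_nonneg[OF pd] Ui(1) a Xb by simp
  finally show "0 \<le> v \<bullet> (four_block_mat U (- X) (- transpose_mat X) (transpose_mat X * mat_inv U * X) *\<^sub>v v)" .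
qed

section \<open>Weighted integrals and Gram matrices\<close>

lemma abs_mult_le_sum_squares:
  fixes x y :: real
  shows "\<bar>x * y\<bar> \<le> x\<^sup>2 + y\<^sup>2"
proof -
  have "0 \<le> (\<bar>x\<bar> - \<bar>y\<bar>)\<^sup>2" by simp
  then have "2 * \<bar>x * y\<bar> \<le> x\<^sup>2 + y\<^sup>2" by (simp add: power2_diff abs_mult)
  then show ?thesis by (smt (verit) zero_le_power2)
qed

lemma square_index_le_scalar_prod:
  fixes v :: "real Matrix.vec"
  assumes "v \<in> carrier_vec k" "i < k"
  shows "(v $ i)\<^sup>2 \<le> v \<bullet> v"
proof -
  have "(v $ i)\<^sup>2 = v $ i * v $ i" by (simp add: power2_eq_square)
  also have "\<dots> \<le> (\<Sum>j<k. v $ j * v $ j)"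
    using assms(2) by (intro member_le_sum[where f = "\<lambda>j. v $ j * v $ j"]) auto
  finally show ?thesis using assms(1) by (simp add: scalar_prod_def atLeast0LessThan)
qed

lemma set_borel_measurable_mult:
  fixes f g :: "'a \<Rightarrow> real"
  assumes "set_borel_measurable M A f" "set_borel_measurable M A g"
  shows "set_borel_measurable M A (\<lambda>x. f x * g x)"
proof -
  have "(\<lambda>x. indicator A x *\<^sub>R (f x * g x)) = (\<lambda>x. (indicator A x *\<^sub>R f x) * (indicator A x *\<^sub>R g x))"
    by (auto simp: indicator_def)
  then show ?thesis using assms unfolding set_borel_measurable_def by simp
qed

lemma set_borel_measurable_lincomb:
  fixes f :: "'i \<Rightarrow> 'a \<Rightarrow> real"
  assumes "\<And>j. j \<in> J \<Longrightarrow> set_borel_measurable M A (f j)"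
  shows "set_borel_measurable M A (\<lambda>x. \<Sum>j\<in>J. c j * f j x)"
  using assms unfolding set_borel_measurable_def by (simp add: sum_distrib_left mult.left_commute)

lemma set_integrable_sum:
  fixes f :: "'i \<Rightarrow> 'a \<Rightarrow> real"
  assumes "\<And>i. i \<in> I \<Longrightarrow> set_integrable M A (f i)"
  shows "set_integrable M A (\<lambda>x. \<Sum>i\<in>I. f i x)"
  using assms unfolding set_integrable_def by (simp add: sum_distrib_left)

lemma set_integral_sum:
  fixes f :: "'i \<Rightarrow> 'a \<Rightarrow> real"
  assumes "\<And>i. i \<in> I \<Longrightarrow> set_integrable M A (f i)"
  shows "(LINT x:A|M. (\<Sum>i\<in>I. f i x)) = (\<Sum>i\<in>I. LINT x:A|M. f i x)"
  using assms unfolding set_integrable_def set_lebesgue_integral_def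
  by (simp add: sum_distrib_left integral_sum)

lemma set_integral_double_sum:
  fixes f :: "'i \<Rightarrow> 'j \<Rightarrow> 'a \<Rightarrow> real"
  assumes "\<And>i j. i \<in> I \<Longrightarrow> j \<in> J \<Longrightarrow> set_integrable M A (f i j)"
  shows "set_integrable M A (\<lambda>x. \<Sum>i\<in>I. \<Sum>j\<in>J. f i j x)"
    and "(LINT x:A|M. \<Sum>i\<in>I. \<Sum>j\<in>J. f i j x) = (\<Sum>i\<in>I. \<Sum>j\<in>J. LINT x:A|M. f i j x)"
proof -
  show "set_integrable M A (\<lambda>x. \<Sum>i\<in>I. \<Sum>j\<in>J. f i j x)"
    using assms by (intro set_integrable_sum)
  have "(LINT x:A|M. \<Sum>i\<in>I. \<Sum>j\<in>J. f i j x) = (\<Sum>i\<in>I. LINT x:A|M. \<Sum>j\<in>J. f i j x)"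
    using assms by (intro set_integral_sum set_integrable_sum)
  also have "\<dots> = (\<Sum>i\<in>I. \<Sum>j\<in>J. LINT x:A|M. f i j x)"
    using assms by (intro sum.cong refl set_integral_sum)
  finally show "(LINT x:A|M. \<Sum>i\<in>I. \<Sum>j\<in>J. f i j x) = (\<Sum>i\<in>I. \<Sum>j\<in>J. LINT x:A|M. f i j x)" .
qed

lemma mat_integral_carrier: "mat_integral K w r c M \<in> carrier_mat r c"
  by (simp add: mat_integral_def)

lemma scalar_prod_mat_integral:
  fixes M :: "real \<Rightarrow> real mat"
  assumes M: "\<And>\<tau>. M \<tau> \<in> carrier_mat r c"
    and int: "\<And>p q. p < r \<Longrightarrow> q < c \<Longrightarrow> set_integrable lebesgue K (\<lambda>\<tau>. w \<tau> * M \<tau> $$ (p, q))"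
    and u: "u \<in> carrier_vec r" and v: "v \<in> carrier_vec c"
  shows "u \<bullet> (mat_integral K w r c M *\<^sub>v v) = (LINT \<tau>:K|lebesgue. w \<tau> * (u \<bullet> (M \<tau> *\<^sub>v v)))"
proof -
  have int': "set_integrable lebesgue K (\<lambda>\<tau>. u $ p * v $ q * (w \<tau> * M \<tau> $$ (p, q)))"
    if "p \<in> {..<r}" "q \<in> {..<c}" for p q
    using int[of p q] that by (intro set_integrable_mult_right) auto
  have "u \<bullet> (mat_integral K w r c M *\<^sub>v v)
      = (\<Sum>p<r. \<Sum>q<c. u $ p * v $ q * (LINT \<tau>:K|lebesgue. w \<tau> * M \<tau> $$ (p, q)))"
    unfolding scalar_prod_as_sum[OF mat_integral_carrier u v] by (simp add: mat_integral_def mult.commute)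
  also have "\<dots> = (\<Sum>p<r. \<Sum>q<c. LINT \<tau>:K|lebesgue. u $ p * v $ q * (w \<tau> * M \<tau> $$ (p, q)))"
    by (simp only: set_integral_mult_right)
  also have "\<dots> = (LINT \<tau>:K|lebesgue. \<Sum>p<r. \<Sum>q<c. u $ p * v $ q * (w \<tau> * M \<tau> $$ (p, q)))"
    by (rule set_integral_double_sum(2)[symmetric]) (rule int')
  also have "\<dots> = (LINT \<tau>:K|lebesgue. w \<tau> * (u \<bullet> (M \<tau> *\<^sub>v v)))"
    unfolding scalar_prod_as_sum[OF M u v] by (simp add: sum_distrib_left mult_ac)
  finally show ?thesis .
qed

lemma reshape_vec_integral:
  "reshape d n (vec_integral K w (d * n) g) = mat_integral K w d n (\<lambda>\<tau>. reshape d n (g \<tau>))"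
  by (rule eq_matI) (simp_all add: vec_integral_def mat_integral_def mult_add_less_mult)

lemma weighted_L2_carrier: "weighted_L2 K w N \<phi> \<Longrightarrow> \<phi> \<tau> \<in> carrier_vec N"
  by (simp add: weighted_L2_def)

definition cross_gram :: "real set \<Rightarrow> (real \<Rightarrow> real) \<Rightarrow> nat \<Rightarrow> nat \<Rightarrow>
    (real \<Rightarrow> real Matrix.vec) \<Rightarrow> (real \<Rightarrow> real Matrix.vec) \<Rightarrow> real mat" where
  "cross_gram K w N M \<phi> \<psi> = mat_integral K w N M (\<lambda>\<tau>. col_mat (\<phi> \<tau>) * transpose_mat (col_mat (\<psi> \<tau>)))"

lemma cross_gram_carrier [simp]: "cross_gram K w N M \<phi> \<psi> \<in> carrier_mat N M"
  and dim_cross_gram [simp]: "dim_row (cross_gram K w N M \<phi> \<psi>) = N" "dim_col (cross_gram K w N M \<phi> \<psi>) = M"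
  by (simp_all add: cross_gram_def mat_integral_def)

lemma index_col_mat_mult_transpose:
  "a < dim_vec u \<Longrightarrow> b < dim_vec v \<Longrightarrow> (col_mat u * transpose_mat (col_mat v)) $$ (a, b) = u $ a * v $ b"
  by (simp add: scalar_prod_def)

lemma index_cross_gram:
  fixes \<phi> \<psi> :: "real \<Rightarrow> real Matrix.vec"
  assumes "\<And>\<tau>. \<phi> \<tau> \<in> carrier_vec N" "\<And>\<tau>. \<psi> \<tau> \<in> carrier_vec M" "a < N" "b < M"
  shows "cross_gram K w N M \<phi> \<psi> $$ (a, b) = (LINT \<tau>:K|lebesgue. w \<tau> * (\<phi> \<tau> $ a * \<psi> \<tau> $ b))"
proof -
  have "dim_vec (\<phi> \<tau>) = N" "dim_vec (\<psi> \<tau>) = M" for \<tau> using assms(1,2) by auto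
  then show ?thesis
    using assms(3,4) by (simp add: cross_gram_def mat_integral_def index_col_mat_mult_transpose del: index_mult_mat)
qed

lemma cross_gram_swap:
  fixes \<phi> \<psi> :: "real \<Rightarrow> real Matrix.vec"
  assumes "\<And>\<tau>. \<phi> \<tau> \<in> carrier_vec N" "\<And>\<tau>. \<psi> \<tau> \<in> carrier_vec M"
  shows "cross_gram K w M N \<psi> \<phi> = transpose_mat (cross_gram K w N M \<phi> \<psi>)"
  using assms by (intro eq_matI) (simp_all add: index_cross_gram mult.commute)

locale nonneg_weight =
  fixes K :: "real set" and w :: "real \<Rightarrow> real"
  assumes weight_measurable: "set_borel_measurable lebesgue K w"
    and weight_nonneg: "\<And>\<tau>. \<tau> \<in> K \<Longrightarrow> 0 \<le> w \<tau>"
begin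

lemma set_integrable_weighted_L2_mult:
  fixes \<phi> \<psi> :: "real \<Rightarrow> real Matrix.vec"
  assumes \<phi>: "weighted_L2 K w N \<phi>" and \<psi>: "weighted_L2 K w M \<psi>" and a: "a < N" and b: "b < M"
  shows "set_integrable lebesgue K (\<lambda>\<tau>. w \<tau> * (\<phi> \<tau> $ a * \<psi> \<tau> $ b))"
proof (rule set_integrable_bound)
  show "set_integrable lebesgue K (\<lambda>\<tau>. w \<tau> * (\<phi> \<tau> \<bullet> \<phi> \<tau>) + w \<tau> * (\<psi> \<tau> \<bullet> \<psi> \<tau>))"
    using \<phi> \<psi> unfolding weighted_L2_def by simp
  have "set_borel_measurable lebesgue K (\<lambda>\<tau>. \<phi> \<tau> $ a)" "set_borel_measurable lebesgue K (\<lambda>\<tau>. \<psi> \<tau> $ b)"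
    using \<phi> \<psi> a b unfolding weighted_L2_def by blast+
  then show "set_borel_measurable lebesgue K (\<lambda>\<tau>. w \<tau> * (\<phi> \<tau> $ a * \<psi> \<tau> $ b))"
    by (intro set_borel_measurable_mult weight_measurable)
  show "AE \<tau> in lebesgue. \<tau> \<in> K \<longrightarrow>
      norm (w \<tau> * (\<phi> \<tau> $ a * \<psi> \<tau> $ b)) \<le> norm (w \<tau> * (\<phi> \<tau> \<bullet> \<phi> \<tau>) + w \<tau> * (\<psi> \<tau> \<bullet> \<psi> \<tau>))"
  proof (intro AE_I2 impI)
    fix \<tau> assume "\<tau> \<in> K"
    have "\<bar>\<phi> \<tau> $ a * \<psi> \<tau> $ b\<bar> \<le> (\<phi> \<tau> $ a)\<^sup>2 + (\<psi> \<tau> $ b)\<^sup>2"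
      by (rule abs_mult_le_sum_squares)
    also have "\<dots> \<le> \<phi> \<tau> \<bullet> \<phi> \<tau> + \<psi> \<tau> \<bullet> \<psi> \<tau>"
      using \<phi> \<psi> a b by (intro add_mono square_index_le_scalar_prod) (auto intro: weighted_L2_carrier)
    finally have "w \<tau> * \<bar>\<phi> \<tau> $ a * \<psi> \<tau> $ b\<bar> \<le> w \<tau> * (\<phi> \<tau> \<bullet> \<phi> \<tau> + \<psi> \<tau> \<bullet> \<psi> \<tau>)"
      using weight_nonneg[OF \<open>\<tau> \<in> K\<close>] by (rule mult_left_mono)
    then show "norm (w \<tau> * (\<phi> \<tau> $ a * \<psi> \<tau> $ b)) \<le> norm (w \<tau> * (\<phi> \<tau> \<bullet> \<phi> \<tau>) + w \<tau> * (\<psi> \<tau> \<bullet> \<psi> \<tau>))"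
      using weight_nonneg[OF \<open>\<tau> \<in> K\<close>] by (simp add: abs_mult distrib_left)
  qed
qed

lemma set_integral_bilinear_form:
  fixes \<phi> \<psi> :: "real \<Rightarrow> real Matrix.vec"
  assumes \<phi>: "weighted_L2 K w N \<phi>" and \<psi>: "weighted_L2 K w M \<psi>" and A: "A \<in> carrier_mat N M"
  shows "set_integrable lebesgue K (\<lambda>\<tau>. w \<tau> * (\<phi> \<tau> \<bullet> (A *\<^sub>v \<psi> \<tau>)))"
    and "(LINT \<tau>:K|lebesgue. w \<tau> * (\<phi> \<tau> \<bullet> (A *\<^sub>v \<psi> \<tau>))) = frobenius_prod A (cross_gram K w N M \<phi> \<psi>)"
proof -
  have expand: "w \<tau> * (\<phi> \<tau> \<bullet> (A *\<^sub>v \<psi> \<tau>)) = (\<Sum>a<N. \<Sum>b<M. A $$ (a, b) * (w \<tau> * (\<phi> \<tau> $ a * \<psi> \<tau> $ b)))"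
    for \<tau> using A weighted_L2_carrier[OF \<phi>] weighted_L2_carrier[OF \<psi>]
    by (simp add: scalar_prod_as_sum sum_distrib_left mult_ac)
  have int: "set_integrable lebesgue K (\<lambda>\<tau>. A $$ (a, b) * (w \<tau> * (\<phi> \<tau> $ a * \<psi> \<tau> $ b)))"
    if "a \<in> {..<N}" "b \<in> {..<M}" for a b
    using set_integrable_weighted_L2_mult[OF \<phi> \<psi>] that by auto
  show "set_integrable lebesgue K (\<lambda>\<tau>. w \<tau> * (\<phi> \<tau> \<bullet> (A *\<^sub>v \<psi> \<tau>)))"
    unfolding expand by (rule set_integral_double_sum(1)) (rule int)
  have "(LINT \<tau>:K|lebesgue. w \<tau> * (\<phi> \<tau> \<bullet> (A *\<^sub>v \<psi> \<tau>)))
      = (\<Sum>a<N. \<Sum>b<M. LINT \<tau>:K|lebesgue. A $$ (a, b) * (w \<tau> * (\<phi> \<tau> $ a * \<psi> \<tau> $ b)))"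
    unfolding expand by (rule set_integral_double_sum(2)) (rule int)
  also have "\<dots> = frobenius_prod A (cross_gram K w N M \<phi> \<psi>)"
    using A by (simp add: frobenius_prod_def index_cross_gram weighted_L2_carrier[OF \<phi>] weighted_L2_carrier[OF \<psi>])
  finally show "(LINT \<tau>:K|lebesgue. w \<tau> * (\<phi> \<tau> \<bullet> (A *\<^sub>v \<psi> \<tau>))) = frobenius_prod A (cross_gram K w N M \<phi> \<psi>)" .
qed

lemma weighted_L2_mult_mat_vec:
  fixes \<phi> :: "real \<Rightarrow> real Matrix.vec"
  assumes \<phi>: "weighted_L2 K w N \<phi>" and A: "A \<in> carrier_mat k N"
  shows "weighted_L2 K w k (\<lambda>\<tau>. A *\<^sub>v \<phi> \<tau>)"
  unfolding weighted_L2_def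
proof (intro conjI allI impI)
  show "A *\<^sub>v \<phi> \<tau> \<in> carrier_vec k" for \<tau> using A weighted_L2_carrier[OF \<phi>] by (rule mult_mat_vec_carrier)
  fix i assume "i < k"
  with A weighted_L2_carrier[OF \<phi>]
  have "(A *\<^sub>v \<phi> \<tau>) $ i = (\<Sum>j<N. A $$ (i, j) * \<phi> \<tau> $ j)" for \<tau>
    by (rule index_mult_mat_vec_sum)
  moreover have "set_borel_measurable lebesgue K (\<lambda>\<tau>. \<Sum>j<N. A $$ (i, j) * \<phi> \<tau> $ j)"
    using \<phi> unfolding weighted_L2_def by (intro set_borel_measurable_lincomb) auto
  ultimately show "set_borel_measurable lebesgue K (\<lambda>\<tau>. (A *\<^sub>v \<phi> \<tau>) $ i)" by simp
next
  have "(A *\<^sub>v \<phi> \<tau>) \<bullet> (A *\<^sub>v \<phi> \<tau>) = \<phi> \<tau> \<bullet> ((transpose_mat A * A) *\<^sub>v \<phi> \<tau>)" for \<tau>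
    by (rule scalar_prod_mult_mat_vec[OF A A weighted_L2_carrier[OF \<phi>] weighted_L2_carrier[OF \<phi>]])
  then show "set_integrable lebesgue K (\<lambda>\<tau>. w \<tau> * ((A *\<^sub>v \<phi> \<tau>) \<bullet> (A *\<^sub>v \<phi> \<tau>)))"
    using set_integral_bilinear_form(1)[OF \<phi> \<phi>, of "transpose_mat A * A"] A by simp
qed

lemma cross_gram_mult_mat_vec:
  fixes \<phi> \<psi> :: "real \<Rightarrow> real Matrix.vec"
  assumes \<phi>: "weighted_L2 K w N \<phi>" and \<psi>: "weighted_L2 K w M \<psi>"
    and A: "A \<in> carrier_mat k N" and B: "B \<in> carrier_mat l M"
  shows "cross_gram K w k l (\<lambda>\<tau>. A *\<^sub>v \<phi> \<tau>) (\<lambda>\<tau>. B *\<^sub>v \<psi> \<tau>) = A * cross_gram K w N M \<phi> \<psi> * transpose_mat B"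
proof (rule eq_matI)
  fix a b assume "a < dim_row (A * cross_gram K w N M \<phi> \<psi> * transpose_mat B)"
    "b < dim_col (A * cross_gram K w N M \<phi> \<psi> * transpose_mat B)"
  then have a: "a < k" and b: "b < l" using A B by auto
  define C where "C = mat N M (\<lambda>(i, j). A $$ (a, i) * B $$ (b, j))"
  have C: "C \<in> carrier_mat N M" by (simp add: C_def)
  have pointwise: "(A *\<^sub>v \<phi> \<tau>) $ a * (B *\<^sub>v \<psi> \<tau>) $ b = \<phi> \<tau> \<bullet> (C *\<^sub>v \<psi> \<tau>)" for \<tau>
  proof -
    have "(A *\<^sub>v \<phi> \<tau>) $ a * (B *\<^sub>v \<psi> \<tau>) $ b
        = (\<Sum>i<N. A $$ (a, i) * \<phi> \<tau> $ i) * (\<Sum>j<M. B $$ (b, j) * \<psi> \<tau> $ j)"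
      using A B a b weighted_L2_carrier[OF \<phi>] weighted_L2_carrier[OF \<psi>]
      by (simp add: index_mult_mat_vec_sum del: index_mult_mat_vec)
    also have "\<dots> = \<phi> \<tau> \<bullet> (C *\<^sub>v \<psi> \<tau>)"
      unfolding scalar_prod_as_sum[OF C weighted_L2_carrier[OF \<phi>] weighted_L2_carrier[OF \<psi>]]
      by (simp add: sum_product C_def mult_ac)
    finally show ?thesis .
  qed
  have "cross_gram K w k l (\<lambda>\<tau>. A *\<^sub>v \<phi> \<tau>) (\<lambda>\<tau>. B *\<^sub>v \<psi> \<tau>) $$ (a, b)
      = (LINT \<tau>:K|lebesgue. w \<tau> * ((A *\<^sub>v \<phi> \<tau>) $ a * (B *\<^sub>v \<psi> \<tau>) $ b))"
    using A B a b weighted_L2_carrier[OF \<phi>] weighted_L2_carrier[OF \<psi>]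
    by (intro index_cross_gram) (auto intro: mult_mat_vec_carrier)
  also have "\<dots> = frobenius_prod C (cross_gram K w N M \<phi> \<psi>)"
    unfolding pointwise by (rule set_integral_bilinear_form(2)[OF \<phi> \<psi> C])
  also have "\<dots> = (A * cross_gram K w N M \<phi> \<psi> * transpose_mat B) $$ (a, b)"
    using A B a b by (simp add: frobenius_prod_def C_def scalar_prod_def atLeast0LessThan sum_distrib_left
        sum_distrib_right mult_ac sum.swap[where A = "{..<N}"])
  finally show "cross_gram K w k l (\<lambda>\<tau>. A *\<^sub>v \<phi> \<tau>) (\<lambda>\<tau>. B *\<^sub>v \<psi> \<tau>) $$ (a, b)
      = (A * cross_gram K w N M \<phi> \<psi> * transpose_mat B) $$ (a, b)" .
qed (use A B in auto)

lemma cross_gram_mult_mat_vec_right: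
  fixes \<phi> \<psi> :: "real \<Rightarrow> real Matrix.vec"
  assumes \<phi>: "weighted_L2 K w N \<phi>" and \<psi>: "weighted_L2 K w M \<psi>" and B: "B \<in> carrier_mat l M"
  shows "cross_gram K w N l \<phi> (\<lambda>\<tau>. B *\<^sub>v \<psi> \<tau>) = cross_gram K w N M \<phi> \<psi> * transpose_mat B"
proof -
  have "(\<lambda>\<tau>. 1\<^sub>m N *\<^sub>v \<phi> \<tau>) = \<phi>" using weighted_L2_carrier[OF \<phi>] by auto
  then show ?thesis
    using cross_gram_mult_mat_vec[OF \<phi> \<psi> one_carrier_mat B] by simp
qed

lemma psd_four_block_integral_bound:
  fixes a b :: "real \<Rightarrow> real Matrix.vec"
  assumes U: "U \<in> carrier_mat n n" and X: "X \<in> carrier_mat n D" and Y: "Y \<in> carrier_mat D D"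
    and psd: "psd_mat (n + D) (four_block_mat U (- X) (- transpose_mat X) Y)"
    and a: "weighted_L2 K w n a" and b: "weighted_L2 K w D b"
  shows "2 * frobenius_prod X (cross_gram K w n D a b)
    \<le> frobenius_prod U (cross_gram K w n n a a) + frobenius_prod Y (cross_gram K w D D b b)"
proof -
  note ints = set_integral_bilinear_form(1)[OF a b X] set_integral_bilinear_form(1)[OF a a U]
    set_integral_bilinear_form(1)[OF b b Y]
  have "(LINT \<tau>:K|lebesgue. 2 * (w \<tau> * (a \<tau> \<bullet> (X *\<^sub>v b \<tau>))))
      \<le> (LINT \<tau>:K|lebesgue. w \<tau> * (a \<tau> \<bullet> (U *\<^sub>v a \<tau>)) + w \<tau> * (b \<tau> \<bullet> (Y *\<^sub>v b \<tau>)))"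
  proof (rule set_integral_mono)
    fix \<tau> assume "\<tau> \<in> K"
    have "2 * (a \<tau> \<bullet> (X *\<^sub>v b \<tau>)) \<le> a \<tau> \<bullet> (U *\<^sub>v a \<tau>) + b \<tau> \<bullet> (Y *\<^sub>v b \<tau>)"
      using U X Y psd weighted_L2_carrier[OF a] weighted_L2_carrier[OF b] by (rule psd_four_block_quadratic)
    from mult_left_mono[OF this weight_nonneg[OF \<open>\<tau> \<in> K\<close>]]
    show "2 * (w \<tau> * (a \<tau> \<bullet> (X *\<^sub>v b \<tau>))) \<le> w \<tau> * (a \<tau> \<bullet> (U *\<^sub>v a \<tau>)) + w \<tau> * (b \<tau> \<bullet> (Y *\<^sub>v b \<tau>))"
      by (simp add: algebra_simps)
  qed (use ints in auto)
  then show ?thesis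
    using ints by (simp add: set_integral_bilinear_form(2)[OF a b X] set_integral_bilinear_form(2)[OF a a U]
        set_integral_bilinear_form(2)[OF b b Y])
qed

lemma scalar_prod_mat_integral_kron_sandwich:
  fixes f :: "real \<Rightarrow> real Matrix.vec"
  assumes f: "weighted_L2 K w d f" and Y: "Y \<in> carrier_mat (d * m) (d * m)" and z: "z \<in> carrier_vec m"
  defines "Z \<equiv> kron (1\<^sub>m d) (col_mat z)"
  shows "z \<bullet> (mat_integral K w m m
      (\<lambda>\<tau>. kron (transpose_mat (col_mat (f \<tau>))) (1\<^sub>m m) * Y * kron (col_mat (f \<tau>)) (1\<^sub>m m)) *\<^sub>v z)
    = frobenius_prod Y (Z * cross_gram K w d d f f * transpose_mat Z)"
proof -
  let ?S = "\<lambda>\<tau>. kron (transpose_mat (col_mat (f \<tau>))) (1\<^sub>m m) * Y * kron (col_mat (f \<tau>)) (1\<^sub>m m)"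
  have E: "kron (1\<^sub>m d) (col_mat u) \<in> carrier_mat (d * m) d" if "u \<in> carrier_vec m" for u
    using that by (intro carrier_matI) simp_all
  have S: "?S \<tau> \<in> carrier_mat m m" for \<tau>
    by (intro carrier_matI) simp_all
  have sandwich: "u \<bullet> (?S \<tau> *\<^sub>v v) = (kron (1\<^sub>m d) (col_mat u) *\<^sub>v f \<tau>) \<bullet> (Y *\<^sub>v (kron (1\<^sub>m d) (col_mat v) *\<^sub>v f \<tau>))"
    if "u \<in> carrier_vec m" "v \<in> carrier_vec m" for u v \<tau>
    using weighted_L2_carrier[OF f] Y that by (rule scalar_prod_kron_sandwich)
  have int: "set_integrable lebesgue K (\<lambda>\<tau>. w \<tau> * ?S \<tau> $$ (p, q))" if "p < m" "q < m" for p q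
  proof -
    have entry: "?S \<tau> $$ (p, q) = (kron (1\<^sub>m d) (col_mat (unit_vec m p)) *\<^sub>v f \<tau>)
        \<bullet> (Y *\<^sub>v (kron (1\<^sub>m d) (col_mat (unit_vec m q)) *\<^sub>v f \<tau>))" for \<tau>
      unfolding index_as_scalar_prod[OF S that] by (rule sandwich) auto
    show ?thesis
      unfolding entry by (rule set_integral_bilinear_form(1)[OF weighted_L2_mult_mat_vec[OF f E]
            weighted_L2_mult_mat_vec[OF f E] Y]) auto
  qed
  have "z \<bullet> (mat_integral K w m m ?S *\<^sub>v z) = (LINT \<tau>:K|lebesgue. w \<tau> * (z \<bullet> (?S \<tau> *\<^sub>v z)))"
    using S int z z by (rule scalar_prod_mat_integral)
  also have "\<dots> = (LINT \<tau>:K|lebesgue. w \<tau> * ((Z *\<^sub>v f \<tau>) \<bullet> (Y *\<^sub>v (Z *\<^sub>v f \<tau>))))"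
    using z by (simp add: sandwich Z_def)
  also have "\<dots> = frobenius_prod Y (cross_gram K w (d * m) (d * m) (\<lambda>\<tau>. Z *\<^sub>v f \<tau>) (\<lambda>\<tau>. Z *\<^sub>v f \<tau>))"
    using E[OF z] unfolding Z_def[symmetric]
    by (intro set_integral_bilinear_form(2) weighted_L2_mult_mat_vec[OF f] Y)
  also have "\<dots> = frobenius_prod Y (Z * cross_gram K w d d f f * transpose_mat Z)"
    using E[OF z] unfolding Z_def[symmetric] by (simp add: cross_gram_mult_mat_vec[OF f f])
  finally show ?thesis .
qed

end

section \<open>The optimal lower bound\<close>

locale quadratic_lower_bound = nonneg_weight +
  fixes d n m :: nat and f x :: "real \<Rightarrow> real Matrix.vec" and U \<Upsilon> :: "real mat" and z :: "real Matrix.vec"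
  assumes f: "weighted_L2 K w d f" and x: "weighted_L2 K w n x"
    and gram_pd: "pd_mat d (cross_gram K w d d f f)"
    and U_pd: "pd_mat n U"
    and \<Upsilon>: "\<Upsilon> \<in> carrier_mat (d * n) m" and z: "z \<in> carrier_vec m"
    and \<Upsilon>_z: "\<Upsilon> *\<^sub>v z = vec_integral K w (d * n) (\<lambda>\<tau>. kron (col_mat (f \<tau>)) (1\<^sub>m n) *\<^sub>v x \<tau>)"
begin

text \<open>In the notation of the paper, \<open>G\<close> is \<open>F\<^sup>-\<^sup>1\<close> and \<open>F\<close> is the sans-serif \<open>F\<close>;
  \<open>m\<close> stands for \<open>\<rho> n\<close> and \<open>Z\<close> is \<open>I\<^sub>d \<otimes> z\<close>.\<close>

abbreviation "G \<equiv> cross_gram K w d d f f"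
abbreviation "F \<equiv> mat_inv G"
abbreviation "\<theta> \<equiv> vec_integral K w (d * n) (\<lambda>\<tau>. kron (col_mat (f \<tau>)) (1\<^sub>m n) *\<^sub>v x \<tau>)"
abbreviation "\<Theta> \<equiv> cross_gram K w d n f x"
abbreviation "Z \<equiv> kron (1\<^sub>m d) (col_mat z)"

definition W :: "real mat \<Rightarrow> real mat" where
  "W Y = mat_integral K w m m
     (\<lambda>\<tau>. kron (transpose_mat (col_mat (f \<tau>))) (1\<^sub>m m) * Y * kron (col_mat (f \<tau>)) (1\<^sub>m m))"

definition lower_bound :: "real mat \<Rightarrow> real mat \<Rightarrow> real" where
  "lower_bound X Y =
     z \<bullet> ((transpose_mat \<Upsilon> * col_stack d n m X + transpose_mat (col_stack d n m X) * \<Upsilon> - W Y) *\<^sub>v z)"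

definition projection_bound :: real where
  "projection_bound = \<theta> \<bullet> (kron F U *\<^sub>v \<theta>)"

definition energy :: real where
  "energy = (LINT \<tau>:K|lebesgue. w \<tau> * (x \<tau> \<bullet> (U *\<^sub>v x \<tau>)))"

lemma U_carrier: "U \<in> carrier_mat n n" and U_sym: "transpose_mat U = U"
  using U_pd unfolding pd_mat_def sym_mat_def by auto

lemma F_carrier: "F \<in> carrier_mat d d" and F_sym: "transpose_mat F = F" and F_G: "F * G = 1\<^sub>m d"
  using pd_mat_inverse[OF gram_pd] unfolding sym_mat_def by auto

lemma Z_carrier: "Z \<in> carrier_mat (d * m) d"
  using z by (intro carrier_matI) simp_all

lemma \<theta>_carrier: "\<theta> \<in> carrier_vec (d * n)"
  by (simp add: vec_integral_def)

lemma reshape_\<theta>: "reshape d n \<theta> = \<Theta>"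
  unfolding reshape_vec_integral cross_gram_def
  using weighted_L2_carrier[OF f] weighted_L2_carrier[OF x] by (simp add: reshape_kron_col_mat_one)

lemma projection_bound_eq: "projection_bound = frobenius_prod (\<Theta> * U) (F * \<Theta>)"
proof -
  have "kron F U *\<^sub>v \<theta> \<in> carrier_vec (d * n)"
    using F_carrier U_carrier by (intro carrier_vecI) simp
  then have "projection_bound = frobenius_prod \<Theta> (reshape d n (kron F U *\<^sub>v \<theta>))"
    unfolding projection_bound_def by (simp add: scalar_prod_reshape[OF \<theta>_carrier] reshape_\<theta>)
  also have "\<dots> = frobenius_prod \<Theta> (F * \<Theta> * transpose_mat U)"
    using F_carrier U_carrier \<theta>_carrier by (simp add: reshape_kron_mult_vec reshape_\<theta>)
  also have "\<dots> = frobenius_prod (\<Theta> * U) (F * \<Theta>)"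
    using F_carrier U_carrier by (simp add: frobenius_prod_mult_right[of _ d n _ n] U_sym)
  finally show ?thesis .
qed

lemma frobenius_prod_U_eq_projection_bound:
  "frobenius_prod U (transpose_mat \<Theta> * (F * \<Theta>)) = projection_bound"
  unfolding projection_bound_eq using U_carrier F_carrier by (simp add: frobenius_prod_mult_left[of _ n n _ d])

lemma lower_bound_eq:
  assumes X: "X \<in> carrier_mat n (d * m)" and Y: "Y \<in> carrier_mat (d * m) (d * m)"
  shows "lower_bound X Y
    = 2 * frobenius_prod (X * Z) (transpose_mat \<Theta>) - frobenius_prod Y (Z * G * transpose_mat Z)"
proof -
  have X_hat: "col_stack d n m X \<in> carrier_mat (d * n) m" by (simp add: col_stack_def)
  have W: "W Y \<in> carrier_mat m m" by (simp add: W_def mat_integral_def)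
  have "lower_bound X Y = 2 * (\<theta> \<bullet> (col_stack d n m X *\<^sub>v z)) - z \<bullet> (W Y *\<^sub>v z)"
    unfolding lower_bound_def quadratic_form_symmetrized[OF \<Upsilon> X_hat W z] \<Upsilon>_z ..
  also have "\<theta> \<bullet> (col_stack d n m X *\<^sub>v z) = frobenius_prod \<Theta> (transpose_mat (X * Z))"
    using X X_hat z \<theta>_carrier by (simp add: scalar_prod_reshape[of _ d n] reshape_\<theta> reshape_col_stack_mult_vec)
  also have "\<dots> = frobenius_prod (X * Z) (transpose_mat \<Theta>)"
    using X Z_carrier by (simp add: frobenius_prod_transpose[of _ d n, symmetric] frobenius_prod_commute[of _ n d])
  also have "z \<bullet> (W Y *\<^sub>v z) = frobenius_prod Y (Z * G * transpose_mat Z)"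
    unfolding W_def using f Y z by (rule scalar_prod_mat_integral_kron_sandwich)
  finally show ?thesis .
qed

lemma lower_bound_le_energy:
  assumes X: "X \<in> carrier_mat n (d * m)" and Y: "Y \<in> carrier_mat (d * m) (d * m)"
    and psd: "psd_mat (n + d * m) (four_block_mat U (- X) (- transpose_mat X) Y)"
  shows "lower_bound X Y \<le> energy"
proof -
  have Zf: "weighted_L2 K w (d * m) (\<lambda>\<tau>. Z *\<^sub>v f \<tau>)" by (rule weighted_L2_mult_mat_vec[OF f Z_carrier])
  have "2 * frobenius_prod X (cross_gram K w n (d * m) x (\<lambda>\<tau>. Z *\<^sub>v f \<tau>))
      \<le> frobenius_prod U (cross_gram K w n n x x)
        + frobenius_prod Y (cross_gram K w (d * m) (d * m) (\<lambda>\<tau>. Z *\<^sub>v f \<tau>) (\<lambda>\<tau>. Z *\<^sub>v f \<tau>))"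
    by (rule psd_four_block_integral_bound[OF U_carrier X Y psd x Zf])
  moreover have "cross_gram K w n (d * m) x (\<lambda>\<tau>. Z *\<^sub>v f \<tau>) = transpose_mat \<Theta> * transpose_mat Z"
    using weighted_L2_carrier[OF f] weighted_L2_carrier[OF x]
    by (simp add: cross_gram_mult_mat_vec_right[OF x f Z_carrier] cross_gram_swap[of f d x n])
  moreover have "frobenius_prod X (transpose_mat \<Theta> * transpose_mat Z) = frobenius_prod (X * Z) (transpose_mat \<Theta>)"
    using X Z_carrier by (simp add: frobenius_prod_mult_right[of _ n "d * m" _ d])
  moreover have "frobenius_prod U (cross_gram K w n n x x) = energy"
    unfolding energy_def by (rule set_integral_bilinear_form(2)[OF x x U_carrier, symmetric])
  moreover have "cross_gram K w (d * m) (d * m) (\<lambda>\<tau>. Z *\<^sub>v f \<tau>) (\<lambda>\<tau>. Z *\<^sub>v f \<tau>) = Z * G * transpose_mat Z"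
    by (rule cross_gram_mult_mat_vec[OF f f Z_carrier Z_carrier])
  ultimately show ?thesis using lower_bound_eq[OF X Y] by simp
qed

text \<open>The same integrated inequality as above, now with \<open>a = S f\<close> for the coefficient matrix
  \<open>S\<close> of the weighted least-squares projection of \<open>x\<close> onto the components of \<open>f\<close>; the
  identity \<open>S G = \<Theta>\<^sup>T\<close> is the normal equation of that projection.\<close>

lemma lower_bound_le_projection_bound:
  assumes X: "X \<in> carrier_mat n (d * m)" and Y: "Y \<in> carrier_mat (d * m) (d * m)"
    and psd: "psd_mat (n + d * m) (four_block_mat U (- X) (- transpose_mat X) Y)"
  shows "lower_bound X Y \<le> projection_bound"
proof -
  define S where "S = transpose_mat (F * \<Theta>)"
  have S: "S \<in> carrier_mat n d" using F_carrier by (simp add: S_def)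
  have "S = transpose_mat \<Theta> * F"
    using F_carrier F_sym by (simp add: S_def transpose_mult[of F d d \<Theta> n])
  then have SG: "S * G = transpose_mat \<Theta>"
    using F_carrier F_G by (simp add: assoc_mult_mat[of _ n d _ d _ d])
  have Sf: "weighted_L2 K w n (\<lambda>\<tau>. S *\<^sub>v f \<tau>)" by (rule weighted_L2_mult_mat_vec[OF f S])
  have Zf: "weighted_L2 K w (d * m) (\<lambda>\<tau>. Z *\<^sub>v f \<tau>)" by (rule weighted_L2_mult_mat_vec[OF f Z_carrier])
  have "2 * frobenius_prod X (cross_gram K w n (d * m) (\<lambda>\<tau>. S *\<^sub>v f \<tau>) (\<lambda>\<tau>. Z *\<^sub>v f \<tau>))
      \<le> frobenius_prod U (cross_gram K w n n (\<lambda>\<tau>. S *\<^sub>v f \<tau>) (\<lambda>\<tau>. S *\<^sub>v f \<tau>))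
        + frobenius_prod Y (cross_gram K w (d * m) (d * m) (\<lambda>\<tau>. Z *\<^sub>v f \<tau>) (\<lambda>\<tau>. Z *\<^sub>v f \<tau>))"
    by (rule psd_four_block_integral_bound[OF U_carrier X Y psd Sf Zf])
  moreover have "cross_gram K w n (d * m) (\<lambda>\<tau>. S *\<^sub>v f \<tau>) (\<lambda>\<tau>. Z *\<^sub>v f \<tau>) = transpose_mat \<Theta> * transpose_mat Z"
    using S Z_carrier SG by (simp add: cross_gram_mult_mat_vec[OF f f S Z_carrier])
  moreover have "frobenius_prod X (transpose_mat \<Theta> * transpose_mat Z) = frobenius_prod (X * Z) (transpose_mat \<Theta>)"
    using X Z_carrier by (simp add: frobenius_prod_mult_right[of _ n "d * m" _ d])
  moreover have "cross_gram K w n n (\<lambda>\<tau>. S *\<^sub>v f \<tau>) (\<lambda>\<tau>. S *\<^sub>v f \<tau>) = S * G * transpose_mat S"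
    by (rule cross_gram_mult_mat_vec[OF f f S S])
  moreover have "S * G * transpose_mat S = transpose_mat \<Theta> * (F * \<Theta>)"
    unfolding SG by (simp add: S_def)
  moreover have "cross_gram K w (d * m) (d * m) (\<lambda>\<tau>. Z *\<^sub>v f \<tau>) (\<lambda>\<tau>. Z *\<^sub>v f \<tau>) = Z * G * transpose_mat Z"
    by (rule cross_gram_mult_mat_vec[OF f f Z_carrier Z_carrier])
  ultimately show ?thesis
    using lower_bound_eq[OF X Y] frobenius_prod_U_eq_projection_bound by simp
qed

lemma transpose_optimal_X_mult_Z:
  assumes X: "X \<in> carrier_mat n (d * m)" and X_hat: "col_stack d n m X = kron F U * \<Upsilon>"
  shows "transpose_mat (X * Z) = F * \<Theta> * U"
proof -
  have K: "kron F U \<in> carrier_mat (d * n) (d * n)"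
    using F_carrier U_carrier by (intro carrier_matI) simp_all
  have "transpose_mat (X * Z) = reshape d n (col_stack d n m X *\<^sub>v z)"
    by (rule reshape_col_stack_mult_vec[OF X z, symmetric])
  also have "col_stack d n m X *\<^sub>v z = kron F U *\<^sub>v \<theta>"
    unfolding X_hat \<Upsilon>_z[symmetric] using K \<Upsilon> z by simp
  also have "reshape d n (kron F U *\<^sub>v \<theta>) = F * \<Theta> * U"
    using F_carrier U_carrier \<theta>_carrier by (simp add: reshape_kron_mult_vec reshape_\<theta> U_sym)
  finally show ?thesis .
qed

lemma optimal_gram_sandwich:
  "transpose_mat (F * \<Theta> * U) * G * (F * \<Theta> * U) = U * (transpose_mat \<Theta> * (F * \<Theta>)) * U"
proof -
  have "transpose_mat (F * \<Theta> * U) = U * transpose_mat \<Theta> * F"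
    using F_carrier U_carrier F_sym U_sym
    by (simp add: transpose_mult[of "F * \<Theta>" d n U n] transpose_mult[of F d d \<Theta> n]
        assoc_mult_mat[of U n n "transpose_mat \<Theta>" d F d])
  then have "transpose_mat (F * \<Theta> * U) * G * (F * \<Theta> * U) = U * transpose_mat \<Theta> * (F * G) * (F * \<Theta> * U)"
    using F_carrier U_carrier by (simp add: assoc_mult_mat[of "U * transpose_mat \<Theta>" n d F d G d])
  also have "\<dots> = U * transpose_mat \<Theta> * (F * \<Theta> * U)"
    using U_carrier F_G by simp
  also have "\<dots> = U * (transpose_mat \<Theta> * (F * \<Theta>)) * U"
  proof -
    have "F * \<Theta> \<in> carrier_mat d n" "F * (\<Theta> * U) \<in> carrier_mat d n"
      "transpose_mat \<Theta> * (F * \<Theta>) \<in> carrier_mat n n"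
      using F_carrier U_carrier by (auto intro!: mult_carrier_mat)
    then show ?thesis
      using F_carrier U_carrier by (simp add: assoc_mult_mat[of F d d \<Theta> n U n]
          assoc_mult_mat[of U n n "transpose_mat \<Theta>" d "F * (\<Theta> * U)" n]
          assoc_mult_mat[of U n n "transpose_mat \<Theta> * (F * \<Theta>)" n U n]
          assoc_mult_mat[of "transpose_mat \<Theta>" n d "F * \<Theta>" n U n])
  qed
  finally show ?thesis .
qed

lemma lower_bound_attains_projection_bound:
  assumes X: "X \<in> carrier_mat n (d * m)" and X_hat: "col_stack d n m X = kron F U * \<Upsilon>"
  shows "lower_bound X (transpose_mat X * mat_inv U * X) = projection_bound"
proof -
  note Ui = pd_mat_inverse[OF U_pd]
  define P where "P = F * \<Theta> * U"
  have P: "P \<in> carrier_mat d n" unfolding P_def using F_carrier U_carrier by (intro mult_carrier_mat) auto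
  have XZ: "X * Z = transpose_mat P"
    using transpose_optimal_X_mult_Z[OF X X_hat] unfolding P_def by (metis transpose_transpose)
  have "frobenius_prod (X * Z) (transpose_mat \<Theta>) = frobenius_prod \<Theta> P"
    unfolding XZ using P by (simp add: frobenius_prod_transpose[of _ d n] frobenius_prod_commute[of _ d n])
  also have "\<dots> = projection_bound"
    unfolding P_def projection_bound_eq using F_carrier U_carrier U_sym
    by (simp add: frobenius_prod_mult_right[of _ d n _ n])
  finally have linear: "frobenius_prod (X * Z) (transpose_mat \<Theta>) = projection_bound" .
  have "X * (Z * G * transpose_mat Z) * transpose_mat X = U * (transpose_mat \<Theta> * (F * \<Theta>)) * U"
    using XZ optimal_gram_sandwich[folded P_def]
    by (simp add: mult_sandwich_transpose[OF X Z_carrier cross_gram_carrier])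
  moreover have "frobenius_prod (transpose_mat X * mat_inv U * X) (Z * G * transpose_mat Z)
      = frobenius_prod (mat_inv U) (X * (Z * G * transpose_mat Z) * transpose_mat X)"
    using Ui(1) X Z_carrier by (intro frobenius_prod_congruence) (auto intro!: mult_carrier_mat)
  moreover have "frobenius_prod (mat_inv U) (U * (transpose_mat \<Theta> * (F * \<Theta>)) * U)
      = frobenius_prod (transpose_mat U * mat_inv U * U) (transpose_mat \<Theta> * (F * \<Theta>))"
    using Ui(1) U_carrier F_carrier U_sym by (subst frobenius_prod_congruence) (auto intro!: mult_carrier_mat)
  moreover have "transpose_mat U * mat_inv U * U = U"
    using U_carrier Ui U_sym by simp
  ultimately have quadratic:
    "frobenius_prod (transpose_mat X * mat_inv U * X) (Z * G * transpose_mat Z) = projection_bound"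
    using frobenius_prod_U_eq_projection_bound by simp
  have "transpose_mat X * mat_inv U * X \<in> carrier_mat (d * m) (d * m)" using X Ui by auto
  then show ?thesis using lower_bound_eq[OF X] linear quadratic by simp
qed

end

theorem theorem3:
  fixes K :: "real set" and w :: "real \<Rightarrow> real"
    and d n \<rho> :: nat
    and f x :: "real \<Rightarrow> real Matrix.vec"
    and U \<Upsilon> :: "real mat" and z :: "real Matrix.vec"
  assumes K_meas: "K \<in> sets lebesgue" and K_nonnull: "emeasure lebesgue K \<noteq> 0"
    and w_int: "set_integrable lebesgue K w"
    and w_nonneg: "\<forall>\<tau>\<in>K. w \<tau> \<ge> 0"
    and w_zeros: "countable {\<tau>\<in>K. w \<tau> = 0}"
    and f_L2: "weighted_L2 K w d f"
    and Finv_pd: "pd_mat d (mat_integral K w d d (\<lambda>\<tau>. col_mat (f \<tau>) * transpose_mat (col_mat (f \<tau>))))"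
    and U_pd: "pd_mat n U"
    and x_L2: "weighted_L2 K w n x"
    and Ups_dim: "\<Upsilon> \<in> carrier_mat (d * n) (\<rho> * n)"
    and z_dim: "z \<in> carrier_vec (\<rho> * n)"
    and Ups_z: "\<Upsilon> *\<^sub>v z = vec_integral K w (d * n) (\<lambda>\<tau>. kron (col_mat (f \<tau>)) (1\<^sub>m n) *\<^sub>v x \<tau>)"
  shows
    "let Fs = mat_inv (mat_integral K w d d (\<lambda>\<tau>. col_mat (f \<tau>) * transpose_mat (col_mat (f \<tau>))));
         \<theta> = vec_integral K w (d * n) (\<lambda>\<tau>. kron (col_mat (f \<tau>)) (1\<^sub>m n) *\<^sub>v x \<tau>);
         W = (\<lambda>Y. mat_integral K w (\<rho> * n) (\<rho> * n)
                (\<lambda>\<tau>. kron (transpose_mat (col_mat (f \<tau>))) (1\<^sub>m (\<rho> * n)) * Y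
                       * kron (col_mat (f \<tau>)) (1\<^sub>m (\<rho> * n))));
         LHS = (\<lambda>X Y. scalar_prod z
                ((transpose_mat \<Upsilon> * col_stack d n (\<rho> * n) X
                  + transpose_mat (col_stack d n (\<rho> * n) X) * \<Upsilon> - W Y) *\<^sub>v z));
         RHS = scalar_prod \<theta> (kron Fs U *\<^sub>v \<theta>)
     in (\<forall>X Y. X \<in> carrier_mat n (\<rho> * d * n) \<longrightarrow>
               Y \<in> carrier_mat (\<rho> * d * n) (\<rho> * d * n) \<longrightarrow> sym_mat Y \<longrightarrow>
               psd_mat (n + \<rho> * d * n) (four_block_mat U (- X) (- transpose_mat X) Y) \<longrightarrow>
               LHS X Y \<le> RHS)
      \<and> (\<forall>X. X \<in> carrier_mat n (\<rho> * d * n) \<longrightarrow> col_stack d n (\<rho> * n) X = kron Fs U * \<Upsilon> \<longrightarrow>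
               (let Y = transpose_mat X * mat_inv U * X in
                  sym_mat Y \<and>
                  psd_mat (n + \<rho> * d * n) (four_block_mat U (- X) (- transpose_mat X) Y) \<and>
                  LHS X Y = RHS))
      \<and> (\<exists>X. X \<in> carrier_mat n (\<rho> * d * n) \<and> col_stack d n (\<rho> * n) X = kron Fs U * \<Upsilon>)
      \<and> RHS \<le> (LINT \<tau>:K|lebesgue. w \<tau> * scalar_prod (x \<tau>) (U *\<^sub>v x \<tau>))"
proof -
  interpret quadratic_lower_bound K w d n "\<rho> * n" f x U \<Upsilon> z
  proof
    show "set_borel_measurable lebesgue K w"
      using w_int unfolding set_integrable_def set_borel_measurable_def by (rule borel_measurable_integrable)
  qed (use w_nonneg f_L2 x_L2 Finv_pd U_pd Ups_dim z_dim Ups_z in \<open>auto simp: cross_gram_def\<close>)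
  note Ui = pd_mat_inverse[OF U_pd]
  have optimal: "sym_mat (transpose_mat X * mat_inv U * X)
      \<and> psd_mat (n + d * (\<rho> * n)) (four_block_mat U (- X) (- transpose_mat X) (transpose_mat X * mat_inv U * X))
      \<and> lower_bound X (transpose_mat X * mat_inv U * X) = projection_bound"
    if "X \<in> carrier_mat n (d * (\<rho> * n))" "col_stack d n (\<rho> * n) X = kron F U * \<Upsilon>" for X
    using sym_mat_congruence[OF Ui(1) that(1) Ui(4)] psd_four_block_schur[OF U_pd that(1)]
      lower_bound_attains_projection_bound[OF that] by blast
  have "kron F U \<in> carrier_mat (d * n) (d * n)" using F_carrier U_carrier by (intro carrier_matI) simp_all
  then obtain X where X: "X \<in> carrier_mat n (d * (\<rho> * n))" "col_stack d n (\<rho> * n) X = kron F U * \<Upsilon>"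
    using col_stack_surj[OF mult_carrier_mat[OF _ \<Upsilon>]] by blast
  then have "projection_bound \<le> energy"
    using optimal lower_bound_le_energy[of X "transpose_mat X * mat_inv U * X"] Ui by auto
  moreover have dims: "\<rho> * d * n = d * (\<rho> * n)" by simp
  ultimately show ?thesis
    using lower_bound_le_projection_bound optimal X unfolding Let_def dims
    unfolding lower_bound_def W_def projection_bound_def energy_def cross_gram_def by blast
qed

end
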